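(* Let $(H,B_1,B_2)$ be a Rota-Baxter system of Hopf algebras with cocycle $\sigma$ and descendent Hopf algebra $H_{B_1,B_2}$ (with underlying space $H_1=\operatorname{Im}(\sigma)$), and let $A$ be a unital commutative algebra. Define $\Psi:\mathrm{Char}(H,A)\to\mathrm{Char}(H_{B_1,B_2},A)$ by $\Psi(f)(a)=f(a)$ for $a\in H_1$. Then $\Psi$ is a well-defined group homomorphism.
   Context: $\mathbb{F}$ is a field of characteristic $0$; Sweedler notation $\Delta(a)=a_1\otimes a_2$. A Rota-Baxter system of Hopf algebras is a triple $(H,B_1,B_2)$ with $(H,\cdot,1,\Delta,\epsilon,S)$ a cocommutative Hopf algebra, $B_1,B_2$ coalgebra homomorphisms with $B_1(1)=B_2(1)=1$, and for all $a,b\in H$: $B_1(a)B_1(b)=B_1(B_1(a_1)bS(B_2(a_2)))$, $B_2(a)B_2(b)=B_2(B_1(a_1)bS(B_2(a_2)))$. Descendent operation $a\circ b=B_1(a_1)bS(B_2(a_2))$, cocycle $\sigma(a)=B_1(a_1)S(B_2(a_2))$; $H_{B_1,B_2}$ is the Hopf algebra $H_1$ with product $\circ$, unit $1$, restricted $\Delta,\epsilon$, antipode $T(a)=S(B_1(a_1))B_2(a_2)$. Convolution: $(f\ast g)(a)=f(a_1)g(a_2)$. $\mathrm{Char}(H,A)$ is the group under $\ast$ of algebra homomorphisms $H\to A$; $\mathrm{Char}(H_{B_1,B_2},A)$ is the group under convolution (w.r.t. the coproduct of $H_1$) of algebra homomorphisms $(H_1,\circ,1)\to A$. *)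

theory Defs
  imports Complex_Main "HOL-Library.FuncSet"
begin

text \<open>An element of H (x) H is represented by a list of pairs (sum of x (x) y).
  Two such lists denote the same tensor iff all products of linear functionals
  agree on them (over a field this is exactly equality in H (x) H).\<close>

definition tensor_eq ::
  "('k::field \<Rightarrow> 'h::ab_group_add \<Rightarrow> 'h) \<Rightarrow> ('h \<times> 'h) list \<Rightarrow> ('h \<times> 'h) list \<Rightarrow> bool" where
  "tensor_eq sc xs ys \<longleftrightarrow>
     (\<forall>(\<phi>::'h \<Rightarrow> 'k) \<psi>. Vector_Spaces.linear sc (*) \<phi> \<and> Vector_Spaces.linear sc (*) \<psi> \<longrightarrow>
        (\<Sum>(x,y)\<leftarrow>xs. \<phi> x * \<psi> y) = (\<Sum>(x,y)\<leftarrow>ys. \<phi> x * \<psi> y))"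

definition tensor3_eq ::
  "('k::field \<Rightarrow> 'h::ab_group_add \<Rightarrow> 'h) \<Rightarrow> ('h \<times> 'h \<times> 'h) list \<Rightarrow> ('h \<times> 'h \<times> 'h) list \<Rightarrow> bool" where
  "tensor3_eq sc xs ys \<longleftrightarrow>
     (\<forall>(\<phi>::'h \<Rightarrow> 'k) \<psi> \<chi>. Vector_Spaces.linear sc (*) \<phi> \<and> Vector_Spaces.linear sc (*) \<psi>
        \<and> Vector_Spaces.linear sc (*) \<chi> \<longrightarrow>
        (\<Sum>(x,y,z)\<leftarrow>xs. \<phi> x * \<psi> y * \<chi> z) = (\<Sum>(x,y,z)\<leftarrow>ys. \<phi> x * \<psi> y * \<chi> z))"

text \<open>The ring structure of H is the type class ring_1; sc is the scalar
  multiplication by the field; Cop a is (a representative of) the coproduct of a,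
  eps the counit, S the antipode.\<close>

definition cocomm_hopf_algebra ::
  "('k::field \<Rightarrow> 'h::ring_1 \<Rightarrow> 'h) \<Rightarrow> ('h \<Rightarrow> ('h \<times> 'h) list) \<Rightarrow> ('h \<Rightarrow> 'k) \<Rightarrow> ('h \<Rightarrow> 'h) \<Rightarrow> bool" where
  "cocomm_hopf_algebra sc Cop eps S \<longleftrightarrow>
     vector_space sc \<and>
     (\<forall>c x y. sc c (x * y) = sc c x * y \<and> sc c (x * y) = x * sc c y) \<and>
     (\<forall>a b. tensor_eq sc (Cop (a + b)) (Cop a @ Cop b)) \<and>
     (\<forall>c a. tensor_eq sc (Cop (sc c a)) (map (\<lambda>(x,y). (sc c x, y)) (Cop a))) \<and>
     (\<forall>a. tensor3_eq sc
            (concat (map (\<lambda>(x,y). map (\<lambda>(u,v). (u,v,y)) (Cop x)) (Cop a)))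
            (concat (map (\<lambda>(x,y). map (\<lambda>(u,v). (x,u,v)) (Cop y)) (Cop a)))) \<and>
     Vector_Spaces.linear sc (*) eps \<and>
     (\<forall>a. (\<Sum>(x,y)\<leftarrow>Cop a. sc (eps x) y) = a \<and> (\<Sum>(x,y)\<leftarrow>Cop a. sc (eps y) x) = a) \<and>
     (\<forall>a b. tensor_eq sc (Cop (a * b))
              (concat (map (\<lambda>(x,y). map (\<lambda>(u,v). (x * u, y * v)) (Cop b)) (Cop a)))) \<and>
     tensor_eq sc (Cop 1) [(1,1)] \<and>
     (\<forall>a b. eps (a * b) = eps a * eps b) \<and> eps 1 = 1 \<and>
     Vector_Spaces.linear sc sc S \<and>
     (\<forall>a. (\<Sum>(x,y)\<leftarrow>Cop a. S x * y) = sc (eps a) 1 \<and> (\<Sum>(x,y)\<leftarrow>Cop a. x * S y) = sc (eps a) 1) \<and>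
     (\<forall>a. tensor_eq sc (Cop a) (map (\<lambda>(x,y). (y,x)) (Cop a)))"

definition coalg_hom ::
  "('k::field \<Rightarrow> 'h::ring_1 \<Rightarrow> 'h) \<Rightarrow> ('h \<Rightarrow> ('h \<times> 'h) list) \<Rightarrow> ('h \<Rightarrow> 'k) \<Rightarrow> ('h \<Rightarrow> 'h) \<Rightarrow> bool" where
  "coalg_hom sc Cop eps B \<longleftrightarrow>
     Vector_Spaces.linear sc sc B \<and>
     (\<forall>a. tensor_eq sc (Cop (B a)) (map (\<lambda>(x,y). (B x, B y)) (Cop a))) \<and>
     (\<forall>a. eps (B a) = eps a)"

definition desc_op ::
  "('h::ring_1 \<Rightarrow> ('h \<times> 'h) list) \<Rightarrow> ('h \<Rightarrow> 'h) \<Rightarrow> ('h \<Rightarrow> 'h) \<Rightarrow> ('h \<Rightarrow> 'h) \<Rightarrow> 'h \<Rightarrow> 'h \<Rightarrow> 'h" where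
  "desc_op Cop S B1 B2 a b = (\<Sum>(x,y)\<leftarrow>Cop a. B1 x * b * S (B2 y))"

definition cocycle ::
  "('h::ring_1 \<Rightarrow> ('h \<times> 'h) list) \<Rightarrow> ('h \<Rightarrow> 'h) \<Rightarrow> ('h \<Rightarrow> 'h) \<Rightarrow> ('h \<Rightarrow> 'h) \<Rightarrow> 'h \<Rightarrow> 'h" where
  "cocycle Cop S B1 B2 a = (\<Sum>(x,y)\<leftarrow>Cop a. B1 x * S (B2 y))"

definition rota_baxter_system ::
  "('k::field \<Rightarrow> 'h::ring_1 \<Rightarrow> 'h) \<Rightarrow> ('h \<Rightarrow> ('h \<times> 'h) list) \<Rightarrow> ('h \<Rightarrow> 'k) \<Rightarrow> ('h \<Rightarrow> 'h)
     \<Rightarrow> ('h \<Rightarrow> 'h) \<Rightarrow> ('h \<Rightarrow> 'h) \<Rightarrow> bool" where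
  "rota_baxter_system sc Cop eps S B1 B2 \<longleftrightarrow>
     cocomm_hopf_algebra sc Cop eps S \<and>
     coalg_hom sc Cop eps B1 \<and> coalg_hom sc Cop eps B2 \<and> B1 1 = 1 \<and> B2 1 = 1 \<and>
     (\<forall>a b. B1 a * B1 b = B1 (desc_op Cop S B1 B2 a b)) \<and>
     (\<forall>a b. B2 a * B2 b = B2 (desc_op Cop S B1 B2 a b))"

definition desc_space ::
  "('h::ring_1 \<Rightarrow> ('h \<times> 'h) list) \<Rightarrow> ('h \<Rightarrow> 'h) \<Rightarrow> ('h \<Rightarrow> 'h) \<Rightarrow> ('h \<Rightarrow> 'h) \<Rightarrow> 'h set" where
  "desc_space Cop S B1 B2 = range (cocycle Cop S B1 B2)"

text \<open>Structural facts presupposed by "the descendent Hopf algebra H_{B1,B2}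
  with underlying space H1": H1 contains 1 and is closed under the descendent
  product, and the coproduct restricts to H1 (x) H1.\<close>

definition desc_hopf_structure ::
  "('k::field \<Rightarrow> 'h::ring_1 \<Rightarrow> 'h) \<Rightarrow> ('h \<Rightarrow> ('h \<times> 'h) list) \<Rightarrow> ('h \<Rightarrow> 'h) \<Rightarrow> ('h \<Rightarrow> 'h) \<Rightarrow> ('h \<Rightarrow> 'h) \<Rightarrow> bool" where
  "desc_hopf_structure sc Cop S B1 B2 \<longleftrightarrow>
     (let H1 = desc_space Cop S B1 B2 in
       1 \<in> H1 \<and>
       (\<forall>a\<in>H1. \<forall>b\<in>H1. desc_op Cop S B1 B2 a b \<in> H1) \<and>
       (\<forall>a\<in>H1. \<exists>xs. tensor_eq sc (Cop a) xs \<and> set xs \<subseteq> H1 \<times> H1))"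

definition desc_cop ::
  "('k::field \<Rightarrow> 'h::ring_1 \<Rightarrow> 'h) \<Rightarrow> ('h \<Rightarrow> ('h \<times> 'h) list) \<Rightarrow> 'h set \<Rightarrow> 'h \<Rightarrow> ('h \<times> 'h) list" where
  "desc_cop sc Cop H1 a = (SOME xs. tensor_eq sc (Cop a) xs \<and> set xs \<subseteq> H1 \<times> H1)"

definition unital_comm_algebra :: "('k::field \<Rightarrow> 'a::comm_ring_1 \<Rightarrow> 'a) \<Rightarrow> bool" where
  "unital_comm_algebra scA \<longleftrightarrow> vector_space scA \<and> (\<forall>c x y. scA c (x * y) = scA c x * y)"

definition Char ::
  "('k::field \<Rightarrow> 'h::ring_1 \<Rightarrow> 'h) \<Rightarrow> ('k \<Rightarrow> 'a::comm_ring_1 \<Rightarrow> 'a) \<Rightarrow> ('h \<Rightarrow> 'a) set" where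
  "Char sc scA = {f. Vector_Spaces.linear sc scA f \<and> f 1 = 1 \<and> (\<forall>a b. f (a * b) = f a * f b)}"

definition conv :: "('h \<Rightarrow> ('h \<times> 'h) list) \<Rightarrow> ('h \<Rightarrow> 'a::comm_ring_1) \<Rightarrow> ('h \<Rightarrow> 'a) \<Rightarrow> 'h \<Rightarrow> 'a" where
  "conv Cop f g = (\<lambda>a. \<Sum>(x,y)\<leftarrow>Cop a. f x * g y)"

text \<open>Char(H_{B1,B2},A): algebra homomorphisms (H1, desc_op, 1) -> A, as functions
  on the carrier H1 (extensional, undefined outside H1).\<close>

definition Char_desc ::
  "('k::field \<Rightarrow> 'h::ring_1 \<Rightarrow> 'h) \<Rightarrow> ('h \<Rightarrow> ('h \<times> 'h) list) \<Rightarrow> ('h \<Rightarrow> 'h) \<Rightarrow> ('h \<Rightarrow> 'h) \<Rightarrow> ('h \<Rightarrow> 'h)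
     \<Rightarrow> ('k \<Rightarrow> 'a::comm_ring_1 \<Rightarrow> 'a) \<Rightarrow> ('h \<Rightarrow> 'a) set" where
  "Char_desc sc Cop S B1 B2 scA =
     (let H1 = desc_space Cop S B1 B2 in
      {f. f \<in> extensional H1 \<and>
          (\<forall>a\<in>H1. \<forall>b\<in>H1. f (a + b) = f a + f b) \<and>
          (\<forall>c. \<forall>a\<in>H1. f (sc c a) = scA c (f a)) \<and>
          f 1 = 1 \<and>
          (\<forall>a\<in>H1. \<forall>b\<in>H1. f (desc_op Cop S B1 B2 a b) = f a * f b)})"

definition conv_desc ::
  "('k::field \<Rightarrow> 'h::ring_1 \<Rightarrow> 'h) \<Rightarrow> ('h \<Rightarrow> ('h \<times> 'h) list) \<Rightarrow> 'h set
     \<Rightarrow> ('h \<Rightarrow> 'a::comm_ring_1) \<Rightarrow> ('h \<Rightarrow> 'a) \<Rightarrow> 'h \<Rightarrow> 'a" where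
  "conv_desc sc Cop H1 f g = (\<lambda>a\<in>H1. \<Sum>(x,y)\<leftarrow>desc_cop sc Cop H1 a. f x * g y)"

definition Psi :: "'h set \<Rightarrow> ('h \<Rightarrow> 'a) \<Rightarrow> 'h \<Rightarrow> 'a" where
  "Psi H1 f = restrict f H1"

end

theory Submission
  imports Defs
begin

text \<open>
  For a character f and any a, commutativity of A gives f(a \<circ> b) = f(\<sigma> a) f(b).
  Hence \<Psi>(f) is multiplicative on H1 = Im \<sigma> as soon as f(\<sigma>(\<sigma> c)) = f(\<sigma> c). This holds
  because B_i(\<sigma> a) = B_i(a) (the Rota-Baxter identities with b = 1) and because \<sigma> is a
  coalgebra map, \<Delta>(\<sigma> a) = \<sigma>(a_1) \<otimes> \<sigma>(a_2); the latter uses cocommutativity twice, to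
  make S a coalgebra map and to swap the two middle tensor factors. Compatibility with
  convolution is immediate, since the coproduct of H1 is the restriction of that of H.
  Identities between representatives of tensors are applied to bilinear maps by
  expanding all tensor components in a basis of H.
\<close>

text \<open>Vector_Spaces.linear without the module axioms for the two scalings, so that
  the closure rules below have no side conditions.\<close>

definition linear_wrt ::
  "('k::field \<Rightarrow> 'h::ab_group_add \<Rightarrow> 'h) \<Rightarrow> ('k \<Rightarrow> 'v::ab_group_add \<Rightarrow> 'v) \<Rightarrow> ('h \<Rightarrow> 'v) \<Rightarrow> bool"
  where "linear_wrt sc scV h \<longleftrightarrow> (\<forall>x y. h (x + y) = h x + h y) \<and> (\<forall>c x. h (sc c x) = scV c (h x))"

lemma linear_wrt_add: "linear_wrt sc scV h \<Longrightarrow> h (x + y) = h x + h y"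
  by (simp add: linear_wrt_def)

lemma linear_wrt_scale: "linear_wrt sc scV h \<Longrightarrow> h (sc c x) = scV c (h x)"
  by (simp add: linear_wrt_def)

lemma linear_wrt_zero: "linear_wrt sc scV h \<Longrightarrow> h 0 = 0"
  using linear_wrt_add[of sc scV h 0 0] by simp

lemma linear_wrt_sum: "linear_wrt sc scV h \<Longrightarrow> h (sum g T) = (\<Sum>t\<in>T. h (g t))"
  by (induction T rule: infinite_finite_induct) (simp_all add: linear_wrt_zero linear_wrt_add)

lemma linear_wrt_sum_list:
  "linear_wrt sc scV h \<Longrightarrow> h (\<Sum>(x,y)\<leftarrow>zs. F x y) = (\<Sum>(x,y)\<leftarrow>zs. h (F x y))"
  by (induction zs) (auto simp: linear_wrt_zero linear_wrt_add)

lemma linear_imp_linear_wrt: "Vector_Spaces.linear sc scV f \<Longrightarrow> linear_wrt sc scV f"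
  unfolding linear_wrt_def Vector_Spaces.linear_def module_hom_def module_hom_axioms_def by blast

lemma linear_wrt_id: "linear_wrt sc sc (\<lambda>x. x)"
  by (simp add: linear_wrt_def)

lemma linear_wrt_comp: "linear_wrt sc scV g \<Longrightarrow> linear_wrt sc sc h \<Longrightarrow> linear_wrt sc scV (\<lambda>x. g (h x))"
  by (simp add: linear_wrt_def)

lemma linear_wrt_scale_left:
  assumes "vector_space scV" "linear_wrt sc (*) \<phi>"
  shows "linear_wrt sc scV (\<lambda>x. scV (\<phi> x) v)"
proof -
  interpret V: vector_space scV by fact
  show ?thesis using assms(2) unfolding linear_wrt_def by (simp add: V.scale_left_distrib)
qed

lemma linear_wrt_sum_list_param:
  assumes "vector_space scV" "\<And>r s. linear_wrt sc scV (\<lambda>p. G p r s)"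
  shows "linear_wrt sc scV (\<lambda>p. \<Sum>(r,s)\<leftarrow>zs. G p r s)"
proof -
  interpret V: vector_space scV by fact
  show ?thesis
  proof (induction zs)
    case Nil
    then show ?case by (simp add: linear_wrt_def)
  next
    case (Cons z zs)
    then show ?case using assms(2)[of "fst z" "snd z"]
      by (simp add: split_def linear_wrt_def V.scale_right_distrib)
  qed
qed

lemma linear_wrt_mult_right_const:
  fixes scA :: "'k::field \<Rightarrow> 'a::comm_ring_1 \<Rightarrow> 'a"
  assumes "\<And>c x y. scA c (x * y) = scA c x * y" "linear_wrt sc scA g"
  shows "linear_wrt sc scA (\<lambda>x. g x * a)"
  using assms unfolding linear_wrt_def by (simp add: distrib_right)

lemma linear_wrt_mult_left_const:
  fixes scA :: "'k::field \<Rightarrow> 'a::comm_ring_1 \<Rightarrow> 'a"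
  assumes "\<And>c x y. scA c (x * y) = scA c x * y" "linear_wrt sc scA g"
  shows "linear_wrt sc scA (\<lambda>x. a * g x)"
  using assms unfolding linear_wrt_def by (simp add: distrib_left mult.commute[of a])

lemma sum_list_swap:
  fixes f :: "'a \<Rightarrow> 'b \<Rightarrow> 'v::comm_monoid_add"
  shows "(\<Sum>z\<leftarrow>xs. \<Sum>w\<leftarrow>ys. f z w) = (\<Sum>w\<leftarrow>ys. \<Sum>z\<leftarrow>xs. f z w)"
  by (induction xs) (simp_all add: sum_list_addf)

lemma sum_list_concat_map: "sum_list (map g (concat xss)) = (\<Sum>xs\<leftarrow>xss. sum_list (map g xs))"
  by (induction xss) simp_all

section \<open>Evaluating multilinear maps on tensor representatives\<close>

lemma (in vector_space) linear_wrt_representation_expansion: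
  assumes B: "independent B" "span B = UNIV" and h: "linear_wrt scale scV h"
    and T: "finite T" "{b. representation B v b \<noteq> 0} \<subseteq> T"
  shows "h v = (\<Sum>b\<in>T. scV (representation B v b) (h b))"
proof -
  have "(\<Sum>b\<in>T. representation B v b *s b) = (\<Sum>b | representation B v b \<noteq> 0. representation B v b *s b)"
    by (rule sum.mono_neutral_right[OF T]) auto
  also have "\<dots> = v"
    by (rule sum_nonzero_representation_eq[OF B(1)]) (simp add: B(2))
  finally have "h v = h (\<Sum>b\<in>T. representation B v b *s b)"
    by simp
  then show ?thesis
    by (simp add: linear_wrt_sum[OF h] linear_wrt_scale[OF h])
qed

lemma (in vector_space) bilinear_representation_expansion:
  assumes B: "independent B" "span B = UNIV" and V: "vector_space scV"
    and F1: "\<And>y. linear_wrt scale scV (\<lambda>x. F x y)" and F2: "\<And>x. linear_wrt scale scV (F x)"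
    and T: "finite T" "{b. representation B x b \<noteq> 0} \<subseteq> T" "{b. representation B y b \<noteq> 0} \<subseteq> T"
  shows "F x y = (\<Sum>b\<in>T. \<Sum>b'\<in>T. scV (representation B x b * representation B y b') (F b b'))"
proof -
  interpret V: vector_space scV by (rule V)
  note expand = linear_wrt_representation_expansion[OF B _ T(1)]
  have "F x y = (\<Sum>b\<in>T. scV (representation B x b) (F b y))"
    by (rule expand[OF F1 T(2)])
  also have "\<dots> = (\<Sum>b\<in>T. scV (representation B x b) (\<Sum>b'\<in>T. scV (representation B y b') (F b b')))"
    by (simp only: expand[OF F2 T(3)])
  finally show ?thesis
    by (simp add: V.scale_sum_right)
qed

lemma (in vector_space) trilinear_representation_expansion:
  assumes B: "independent B" "span B = UNIV" and V: "vector_space scV"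
    and F1: "\<And>y z. linear_wrt scale scV (\<lambda>x. F x y z)" and F2: "\<And>x z. linear_wrt scale scV (\<lambda>y. F x y z)"
    and F3: "\<And>x y. linear_wrt scale scV (F x y)"
    and T: "finite T" "{b. representation B x b \<noteq> 0} \<subseteq> T" "{b. representation B y b \<noteq> 0} \<subseteq> T"
      "{b. representation B z b \<noteq> 0} \<subseteq> T"
  shows "F x y z = (\<Sum>b\<in>T. \<Sum>b'\<in>T. \<Sum>b''\<in>T.
    scV (representation B x b * representation B y b' * representation B z b'') (F b b' b''))"
proof -
  interpret V: vector_space scV by (rule V)
  have "F x y z = (\<Sum>b\<in>T. scV (representation B x b) (F b y z))"
    by (rule linear_wrt_representation_expansion[OF B F1 T(1,2)])
  also have "\<dots> = (\<Sum>b\<in>T. scV (representation B x b)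
      (\<Sum>b'\<in>T. \<Sum>b''\<in>T. scV (representation B y b' * representation B z b'') (F b b' b'')))"
    by (simp only: bilinear_representation_expansion[OF B V F2 F3 T(1,3,4)])
  finally show ?thesis
    by (simp add: V.scale_sum_right mult.assoc)
qed

lemma tensor_eq_sum_bilinear:
  fixes sc :: "'k::field \<Rightarrow> 'h::ab_group_add \<Rightarrow> 'h" and scV :: "'k \<Rightarrow> 'v::ab_group_add \<Rightarrow> 'v"
  assumes H: "vector_space sc" and V: "vector_space scV" and eq: "tensor_eq sc xs ys"
    and F1: "\<And>y. linear_wrt sc scV (\<lambda>x. F x y)" and F2: "\<And>x. linear_wrt sc scV (F x)"
  shows "(\<Sum>(x,y)\<leftarrow>xs. F x y) = (\<Sum>(x,y)\<leftarrow>ys. F x y)"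
proof -
  interpret H: vector_space sc by (rule H)
  interpret V: vector_space scV by (rule V)
  define B where "B = H.extend_basis {}"
  have B: "H.independent B" "H.span B = UNIV"
    by (simp_all add: B_def H.independent_extend_basis H.independent_empty)
  define r where "r v b = H.representation B v b" for v b
  define T where "T = (\<Union>z\<in>set xs \<union> set ys. {b. r (fst z) b \<noteq> 0} \<union> {b. r (snd z) b \<noteq> 0})"
  have "finite T"
    unfolding T_def r_def by (auto intro!: H.finite_representation)
  note F_expand = H.bilinear_representation_expansion[OF B V F1 F2 \<open>finite T\<close>, folded r_def]
  have sum_expand: "(\<Sum>(x,y)\<leftarrow>zs. F x y)
      = (\<Sum>b\<in>T. \<Sum>b'\<in>T. scV (\<Sum>(x,y)\<leftarrow>zs. r x b * r y b') (F b b'))"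
    if "set zs \<subseteq> set xs \<union> set ys" for zs
    using that
  proof (induction zs)
    case (Cons z zs)
    obtain x y where z: "z = (x, y)"
      by force
    have "{b. r x b \<noteq> 0} \<subseteq> T" "{b. r y b \<noteq> 0} \<subseteq> T"
      using Cons.prems z unfolding T_def by force+
    then show ?case
      using Cons by (simp add: z F_expand V.scale_left_distrib sum.distrib)
  qed simp
  have coefficients: "(\<Sum>(x,y)\<leftarrow>xs. r x b * r y b') = (\<Sum>(x,y)\<leftarrow>ys. r x b * r y b')" for b b'
    using eq H.linear_representation[OF B] unfolding tensor_eq_def r_def by blast
  have "(\<Sum>(x,y)\<leftarrow>xs. F x y) = (\<Sum>b\<in>T. \<Sum>b'\<in>T. scV (\<Sum>(x,y)\<leftarrow>xs. r x b * r y b') (F b b'))"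
    by (rule sum_expand) simp
  also have "\<dots> = (\<Sum>b\<in>T. \<Sum>b'\<in>T. scV (\<Sum>(x,y)\<leftarrow>ys. r x b * r y b') (F b b'))"
    by (simp only: coefficients)
  also have "\<dots> = (\<Sum>(x,y)\<leftarrow>ys. F x y)"
    by (rule sum_expand[symmetric]) simp
  finally show ?thesis .
qed

lemma tensor3_eq_sum_trilinear:
  fixes sc :: "'k::field \<Rightarrow> 'h::ab_group_add \<Rightarrow> 'h" and scV :: "'k \<Rightarrow> 'v::ab_group_add \<Rightarrow> 'v"
  assumes H: "vector_space sc" and V: "vector_space scV" and eq: "tensor3_eq sc xs ys"
    and F1: "\<And>y z. linear_wrt sc scV (\<lambda>x. F x y z)" and F2: "\<And>x z. linear_wrt sc scV (\<lambda>y. F x y z)"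
    and F3: "\<And>x y. linear_wrt sc scV (F x y)"
  shows "(\<Sum>(x,y,z)\<leftarrow>xs. F x y z) = (\<Sum>(x,y,z)\<leftarrow>ys. F x y z)"
proof -
  interpret H: vector_space sc by (rule H)
  interpret V: vector_space scV by (rule V)
  define B where "B = H.extend_basis {}"
  have B: "H.independent B" "H.span B = UNIV"
    by (simp_all add: B_def H.independent_extend_basis H.independent_empty)
  define r where "r v b = H.representation B v b" for v b
  define T where "T = (\<Union>z\<in>set xs \<union> set ys. {b. r (fst z) b \<noteq> 0} \<union> {b. r (fst (snd z)) b \<noteq> 0}
     \<union> {b. r (snd (snd z)) b \<noteq> 0})"
  have "finite T"
    unfolding T_def r_def by (auto intro!: H.finite_representation)
  note F_expand = H.trilinear_representation_expansion[OF B V F1 F2 F3 \<open>finite T\<close>, folded r_def]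
  have sum_expand: "(\<Sum>(x,y,z)\<leftarrow>zs. F x y z)
      = (\<Sum>b\<in>T. \<Sum>b'\<in>T. \<Sum>b''\<in>T. scV (\<Sum>(x,y,z)\<leftarrow>zs. r x b * r y b' * r z b'') (F b b' b''))"
    if "set zs \<subseteq> set xs \<union> set ys" for zs
    using that
  proof (induction zs)
    case (Cons w zs)
    obtain x y z where w: "w = (x, y, z)"
      by (cases w) force
    have "{b. r x b \<noteq> 0} \<subseteq> T" "{b. r y b \<noteq> 0} \<subseteq> T" "{b. r z b \<noteq> 0} \<subseteq> T"
      using Cons.prems w unfolding T_def by force+
    then show ?case
      using Cons by (simp add: w F_expand V.scale_left_distrib sum.distrib)
  qed simp
  have coefficients: "(\<Sum>(x,y,z)\<leftarrow>xs. r x b * r y b' * r z b'')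
      = (\<Sum>(x,y,z)\<leftarrow>ys. r x b * r y b' * r z b'')" for b b' b''
    using eq H.linear_representation[OF B] unfolding tensor3_eq_def r_def by blast
  have "(\<Sum>(x,y,z)\<leftarrow>xs. F x y z)
      = (\<Sum>b\<in>T. \<Sum>b'\<in>T. \<Sum>b''\<in>T. scV (\<Sum>(x,y,z)\<leftarrow>xs. r x b * r y b' * r z b'') (F b b' b''))"
    by (rule sum_expand) simp
  also have "\<dots>
      = (\<Sum>b\<in>T. \<Sum>b'\<in>T. \<Sum>b''\<in>T. scV (\<Sum>(x,y,z)\<leftarrow>ys. r x b * r y b' * r z b'') (F b b' b''))"
    by (simp only: coefficients)
  also have "\<dots> = (\<Sum>(x,y,z)\<leftarrow>ys. F x y z)"
    by (rule sum_expand[symmetric]) simp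
  finally show ?thesis .
qed

section \<open>Sweedler sums in a cocommutative Hopf algebra\<close>

text \<open>F evaluated on the chosen representative Cop a of \<Delta>(a); only for bilinear F does the
  value depend on the tensor alone (tensor_eq_sum_bilinear).\<close>

definition sweedler :: "('h \<Rightarrow> ('h \<times> 'h) list) \<Rightarrow> ('h \<Rightarrow> 'h \<Rightarrow> 'v::comm_monoid_add) \<Rightarrow> 'h \<Rightarrow> 'v"
  where "sweedler Cop F a = (\<Sum>(x,y)\<leftarrow>Cop a. F x y)"

lemma linear_wrt_sweedler_app:
  "linear_wrt sc scV h \<Longrightarrow> h (sweedler Cop F a) = sweedler Cop (\<lambda>x y. h (F x y)) a"
  unfolding sweedler_def by (rule linear_wrt_sum_list)

lemma sweedler_swap_sums:
  "sweedler Cop (\<lambda>x y. sweedler Cop (G x y) b) a = sweedler Cop (\<lambda>u v. sweedler Cop (\<lambda>x y. G x y u v) a) b"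
  unfolding sweedler_def split_def by (rule sum_list_swap)

lemma cocycle_sweedler: "cocycle Cop S B1 B2 a = sweedler Cop (\<lambda>x y. B1 x * S (B2 y)) a"
  by (simp add: cocycle_def sweedler_def)

lemma linear_wrt_coalg_hom:
  "coalg_hom sc Cop eps B \<Longrightarrow> linear_wrt sc sc h \<Longrightarrow> linear_wrt sc sc (\<lambda>x. B (h x))"
  unfolding coalg_hom_def by (blast intro: linear_wrt_comp linear_imp_linear_wrt)

lemma vector_space_cocomm_hopf_algebra: "cocomm_hopf_algebra sc Cop eps S \<Longrightarrow> vector_space sc"
  by (simp add: cocomm_hopf_algebra_def)

locale hopf_sweedler =
  fixes sc :: "'k::field \<Rightarrow> 'h::ring_1 \<Rightarrow> 'h" and Cop :: "'h \<Rightarrow> ('h \<times> 'h) list"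
    and eps :: "'h \<Rightarrow> 'k" and S :: "'h \<Rightarrow> 'h" and scV :: "'k \<Rightarrow> 'v::ab_group_add \<Rightarrow> 'v"
  assumes hopf: "cocomm_hopf_algebra sc Cop eps S" and target: "vector_space scV"
begin

sublocale V: vector_space scV
  by (rule target)

abbreviation sw :: "('h \<Rightarrow> 'h \<Rightarrow> 'v) \<Rightarrow> 'h \<Rightarrow> 'v"
  where "sw \<equiv> sweedler Cop"

lemma source: "vector_space sc"
  using hopf by (rule vector_space_cocomm_hopf_algebra)

lemma scale_mult_left: "sc c (x * y) = sc c x * y"
  using hopf by (simp add: cocomm_hopf_algebra_def)

lemma scale_mult_right: "sc c (x * y) = x * sc c y"
  using hopf unfolding cocomm_hopf_algebra_def by blast

lemma linear_wrt_eps: "linear_wrt sc (*) eps"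
  using hopf by (simp add: cocomm_hopf_algebra_def linear_imp_linear_wrt)

lemma linear_wrt_S: "linear_wrt sc sc S"
  using hopf by (simp add: cocomm_hopf_algebra_def linear_imp_linear_wrt)

lemma linear_wrt_mult_right: "linear_wrt sc sc h \<Longrightarrow> linear_wrt sc sc (\<lambda>x. h x * r)"
  by (simp add: linear_wrt_def distrib_right scale_mult_left)

lemma linear_wrt_mult_left: "linear_wrt sc sc h \<Longrightarrow> linear_wrt sc sc (\<lambda>x. r * h x)"
  by (simp add: linear_wrt_def distrib_left scale_mult_right)

lemma linear_wrt_antipode: "linear_wrt sc sc h \<Longrightarrow> linear_wrt sc sc (\<lambda>x. S (h x))"
  by (rule linear_wrt_comp[OF linear_wrt_S])

lemmas linear_wrt_intros =
  linear_wrt_id linear_wrt_mult_right linear_wrt_mult_left linear_wrt_antipode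

lemma sweedler_scale_out: "sw (\<lambda>x y. scV c (G x y)) a = scV c (sw G a)"
proof -
  have "scV c (\<Sum>(x,y)\<leftarrow>zs. G x y) = (\<Sum>(x,y)\<leftarrow>zs. scV c (G x y))" for zs
    by (induction zs) (auto simp: V.scale_right_distrib)
  then show ?thesis
    by (simp add: sweedler_def)
qed

lemma linear_wrt_sweedler_param:
  "(\<And>r s. linear_wrt sc scV (\<lambda>p. G p r s)) \<Longrightarrow> linear_wrt sc scV (\<lambda>p. sw (G p) a)"
  unfolding sweedler_def by (rule linear_wrt_sum_list_param[OF target])

lemma tensor_eq_sweedler:
  assumes "tensor_eq sc xs ys" "\<And>y. linear_wrt sc scV (\<lambda>x. F x y)" "\<And>x. linear_wrt sc scV (F x)"
  shows "(\<Sum>(x,y)\<leftarrow>xs. F x y) = (\<Sum>(x,y)\<leftarrow>ys. F x y)"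
  by (rule tensor_eq_sum_bilinear[OF source target assms])

context
  fixes F :: "'h \<Rightarrow> 'h \<Rightarrow> 'v"
  assumes F_left: "\<And>y. linear_wrt sc scV (\<lambda>x. F x y)" and F_right: "\<And>x. linear_wrt sc scV (F x)"
begin

lemma sweedler_add: "sw F (a + b) = sw F a + sw F b"
proof -
  have "tensor_eq sc (Cop (a + b)) (Cop a @ Cop b)"
    using hopf by (simp add: cocomm_hopf_algebra_def)
  from tensor_eq_sweedler[OF this F_left F_right] show ?thesis
    by (simp add: sweedler_def)
qed

lemma sweedler_scale: "sw F (sc c a) = scV c (sw F a)"
proof -
  have "tensor_eq sc (Cop (sc c a)) (map (\<lambda>(x,y). (sc c x, y)) (Cop a))"
    using hopf by (simp add: cocomm_hopf_algebra_def)
  from tensor_eq_sweedler[OF this F_left F_right]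
  have "sw F (sc c a) = sw (\<lambda>x y. scV c (F x y)) a"
    by (simp add: sweedler_def linear_wrt_scale[OF F_left] o_def split_def)
  then show ?thesis
    by (simp add: sweedler_scale_out)
qed

lemma linear_wrt_sweedler: "linear_wrt sc scV (sw F)"
  by (simp add: linear_wrt_def sweedler_add sweedler_scale)

lemma sweedler_mult: "sw F (a * b) = sw (\<lambda>p q. sw (\<lambda>r s. F (p * r) (q * s)) b) a"
proof -
  have "tensor_eq sc (Cop (a * b)) (concat (map (\<lambda>(x,y). map (\<lambda>(u,v). (x * u, y * v)) (Cop b)) (Cop a)))"
    using hopf by (simp add: cocomm_hopf_algebra_def)
  from tensor_eq_sweedler[OF this F_left F_right] show ?thesis
    by (simp add: sweedler_def sum_list_concat_map o_def split_def)
qed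

lemma sweedler_one: "sw F 1 = F 1 1"
proof -
  have "tensor_eq sc (Cop 1) [(1,1)]"
    using hopf by (simp add: cocomm_hopf_algebra_def)
  from tensor_eq_sweedler[OF this F_left F_right] show ?thesis
    by (simp add: sweedler_def)
qed

lemma sweedler_flip: "sw F a = sw (\<lambda>p q. F q p) a"
proof -
  have "tensor_eq sc (Cop a) (map (\<lambda>(x,y). (y,x)) (Cop a))"
    using hopf by (simp add: cocomm_hopf_algebra_def)
  from tensor_eq_sweedler[OF this F_left F_right] show ?thesis
    by (simp add: sweedler_def o_def split_def)
qed

lemma sweedler_coalg_hom:
  assumes "coalg_hom sc Cop eps B"
  shows "sw F (B a) = sw (\<lambda>p q. F (B p) (B q)) a"
proof -
  have "tensor_eq sc (Cop (B a)) (map (\<lambda>(x,y). (B x, B y)) (Cop a))"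
    using assms by (simp add: coalg_hom_def)
  from tensor_eq_sweedler[OF this F_left F_right] show ?thesis
    by (simp add: sweedler_def o_def split_def)
qed

end

lemma sweedler_coassoc:
  fixes T :: "'h \<Rightarrow> 'h \<Rightarrow> 'h \<Rightarrow> 'v"
  assumes "\<And>y z. linear_wrt sc scV (\<lambda>x. T x y z)" "\<And>x z. linear_wrt sc scV (\<lambda>y. T x y z)"
    "\<And>x y. linear_wrt sc scV (T x y)"
  shows "sw (\<lambda>x y. sw (\<lambda>u v. T u v y) x) a = sw (\<lambda>x y. sw (\<lambda>u v. T x u v) y) a"
proof -
  have "tensor3_eq sc (concat (map (\<lambda>(x,y). map (\<lambda>(u,v). (u,v,y)) (Cop x)) (Cop a)))
      (concat (map (\<lambda>(x,y). map (\<lambda>(u,v). (x,u,v)) (Cop y)) (Cop a)))"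
    using hopf by (simp add: cocomm_hopf_algebra_def)
  from tensor3_eq_sum_trilinear[OF source target this assms] show ?thesis
    by (simp add: sweedler_def sum_list_concat_map o_def split_def)
qed

lemma sweedler_counit_left: "linear_wrt sc scV h \<Longrightarrow> sw (\<lambda>p q. scV (eps p) (h q)) a = h a"
  using hopf linear_wrt_sum_list[of sc scV h "\<lambda>x y. sc (eps x) y" "Cop a"]
  by (simp add: cocomm_hopf_algebra_def sweedler_def linear_wrt_scale)

lemma sweedler_counit_right: "linear_wrt sc scV h \<Longrightarrow> sw (\<lambda>p q. scV (eps q) (h p)) a = h a"
  using hopf linear_wrt_sum_list[of sc scV h "\<lambda>x y. sc (eps y) x" "Cop a"]
  by (simp add: cocomm_hopf_algebra_def sweedler_def linear_wrt_scale)

lemma sweedler_antipode_left: "linear_wrt sc scV h \<Longrightarrow> sw (\<lambda>p q. h (S p * q)) a = scV (eps a) (h 1)"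
  using hopf linear_wrt_sum_list[of sc scV h "\<lambda>x y. S x * y" "Cop a"]
  by (simp add: cocomm_hopf_algebra_def sweedler_def linear_wrt_scale)

lemma sweedler_antipode_right: "linear_wrt sc scV h \<Longrightarrow> sw (\<lambda>p q. h (p * S q)) a = scV (eps a) (h 1)"
  using hopf linear_wrt_sum_list[of sc scV h "\<lambda>x y. x * S y" "Cop a"]
  by (simp add: cocomm_hopf_algebra_def sweedler_def linear_wrt_scale)

lemma sweedler_middle_swap:
  fixes K :: "'h \<Rightarrow> 'h \<Rightarrow> 'h \<Rightarrow> 'h \<Rightarrow> 'v"
  assumes K1: "\<And>b c d. linear_wrt sc scV (\<lambda>a. K a b c d)" and K2: "\<And>a c d. linear_wrt sc scV (\<lambda>b. K a b c d)"
    and K3: "\<And>a b d. linear_wrt sc scV (\<lambda>c. K a b c d)" and K4: "\<And>a b c. linear_wrt sc scV (\<lambda>d. K a b c d)"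
  shows "sw (\<lambda>u v. sw (\<lambda>a b. sw (\<lambda>c d. K a b c d) v) u) y = sw (\<lambda>u v. sw (\<lambda>a b. sw (\<lambda>c d. K a c b d) v) u) y"
proof -
  have inner: "sw (\<lambda>b v. sw (\<lambda>c d. K a b c d) v) z = sw (\<lambda>b v. sw (\<lambda>c d. K a c b d) v) z" for a z
  proof -
    have "sw (\<lambda>b v. sw (\<lambda>c d. K a b c d) v) z = sw (\<lambda>t d. sw (\<lambda>b c. K a b c d) t) z"
      by (rule sweedler_coassoc[symmetric]) (auto intro!: K2 K3 K4)
    also have "\<dots> = sw (\<lambda>t d. sw (\<lambda>b c. K a c b d) t) z"
      by (subst sweedler_flip[where F="\<lambda>b c. K a b c d" for d]) (auto intro!: K2 K3)
    also have "\<dots> = sw (\<lambda>b v. sw (\<lambda>c d. K a c b d) v) z"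
      by (rule sweedler_coassoc) (auto intro!: K2 K3 K4)
    finally show ?thesis .
  qed
  have "sw (\<lambda>u v. sw (\<lambda>a b. sw (\<lambda>c d. K a b c d) v) u) y = sw (\<lambda>a z. sw (\<lambda>b v. sw (\<lambda>c d. K a b c d) v) z) y"
    by (rule sweedler_coassoc) (auto intro!: linear_wrt_sweedler linear_wrt_sweedler_param K1 K2 K3 K4)
  also have "\<dots> = sw (\<lambda>a z. sw (\<lambda>b v. sw (\<lambda>c d. K a c b d) v) z) y"
    by (simp only: inner)
  also have "\<dots> = sw (\<lambda>u v. sw (\<lambda>a b. sw (\<lambda>c d. K a c b d) v) u) y"
    by (rule sweedler_coassoc[symmetric]) (auto intro!: linear_wrt_sweedler linear_wrt_sweedler_param K1 K2 K3 K4)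
  finally show ?thesis .
qed

context
  fixes F :: "'h \<Rightarrow> 'h \<Rightarrow> 'v"
  assumes F_left: "\<And>y. linear_wrt sc scV (\<lambda>x. F x y)" and F_right: "\<And>x. linear_wrt sc scV (F x)"
begin

lemma linear_wrt_F_left: "linear_wrt sc sc h \<Longrightarrow> linear_wrt sc scV (\<lambda>x. F (h x) z)"
  by (rule linear_wrt_comp[OF F_left])

lemma linear_wrt_F_right: "linear_wrt sc sc h \<Longrightarrow> linear_wrt sc scV (\<lambda>x. F z (h x))"
  by (rule linear_wrt_comp[OF F_right])

lemma sweedler_antipode_triple_left:
  "sw (\<lambda>v w. sw (\<lambda>a b. sw (\<lambda>c d. F (S a * c) (S b * d)) (v * S w)) u) x
    = scV (eps x) (sw (\<lambda>a b. F (S a) (S b)) u)"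
proof -
  have G: "linear_wrt sc scV (sw (\<lambda>c d. F (S a * c) (S b * d)))" for a b
    by (auto intro!: linear_wrt_sweedler linear_wrt_F_left linear_wrt_F_right linear_wrt_intros)
  have G_one: "sw (\<lambda>c d. F (S a * c) (S b * d)) 1 = F (S a) (S b)" for a b
    by (subst sweedler_one) (auto intro!: linear_wrt_F_left linear_wrt_F_right linear_wrt_intros)
  have "sw (\<lambda>v w. sw (\<lambda>a b. sw (\<lambda>c d. F (S a * c) (S b * d)) (v * S w)) u) x
      = sw (\<lambda>a b. sw (\<lambda>v w. sw (\<lambda>c d. F (S a * c) (S b * d)) (v * S w)) x) u"
    by (rule sweedler_swap_sums)
  also have "\<dots> = sw (\<lambda>a b. scV (eps x) (F (S a) (S b))) u"
    by (simp only: sweedler_antipode_right[OF G] G_one)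
  also have "\<dots> = scV (eps x) (sw (\<lambda>a b. F (S a) (S b)) u)"
    by (rule sweedler_scale_out)
  finally show ?thesis .
qed

lemma sweedler_antipode_triple_right:
  "sw (\<lambda>u v. sw (\<lambda>a b. sw (\<lambda>c d. F (S a * c) (S b * d)) (v * S w)) u) y = scV (eps y) (sw F (S w))"
proof -
  define M where "M p q = sw (\<lambda>e g. F (p * e) (q * g)) (S w)" for p q
  have M_left: "linear_wrt sc sc h \<Longrightarrow> linear_wrt sc scV (\<lambda>x. M (h x) z)" for h z
    unfolding M_def by (auto intro!: linear_wrt_sweedler_param linear_wrt_F_left linear_wrt_intros)
  have M_right: "linear_wrt sc sc h \<Longrightarrow> linear_wrt sc scV (\<lambda>x. M z (h x))" for h z
    unfolding M_def by (auto intro!: linear_wrt_sweedler_param linear_wrt_F_right linear_wrt_intros)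
  have split: "sw (\<lambda>c d. F (S a * c) (S b * d)) (v * S w) = sw (\<lambda>c d. M (S a * c) (S b * d)) v" for a b v
    unfolding M_def
    by (subst sweedler_mult) (auto intro!: linear_wrt_F_left linear_wrt_F_right linear_wrt_intros simp: mult.assoc)
  have "sw (\<lambda>u v. sw (\<lambda>a b. sw (\<lambda>c d. F (S a * c) (S b * d)) (v * S w)) u) y
      = sw (\<lambda>u v. sw (\<lambda>a b. sw (\<lambda>c d. M (S a * c) (S b * d)) v) u) y"
    by (simp only: split)
  also have "\<dots> = sw (\<lambda>u v. sw (\<lambda>a b. sw (\<lambda>c d. M (S a * b) (S c * d)) v) u) y"
    by (rule sweedler_middle_swap) (auto intro!: M_left M_right linear_wrt_intros)
  also have "\<dots> = sw (\<lambda>u v. scV (eps u) (sw (\<lambda>c d. M 1 (S c * d)) v)) y"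
    by (subst sweedler_antipode_left[where h="\<lambda>p. sw (\<lambda>c d. M p (S c * d)) v" for v])
      (auto intro!: linear_wrt_sweedler_param M_left M_right linear_wrt_intros)
  also have "\<dots> = sw (\<lambda>u v. scV (eps u) (scV (eps v) (M 1 1))) y"
    by (subst sweedler_antipode_left[where h="\<lambda>q. M 1 q"]) (auto intro!: M_right linear_wrt_id)
  also have "\<dots> = scV (eps y) (M 1 1)"
    by (rule sweedler_counit_left) (auto intro!: linear_wrt_scale_left[OF target] linear_wrt_eps)
  finally show ?thesis
    by (simp add: M_def)
qed

text \<open>In the cocommutative case S is a coalgebra map: both sides are convolution inverses
  of the coproduct, and evaluating S(w_1) w_2 S(w_3) in the two possible ways
  identifies them.\<close>

lemma sweedler_antipode: "sw F (S w) = sw (\<lambda>p q. F (S p) (S q)) w"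
proof -
  define T where "T u v w' = sw (\<lambda>a b. sw (\<lambda>c d. F (S a * c) (S b * d)) (v * S w')) u" for u v w'
  have lin: "linear_wrt sc scV (\<lambda>u. T u v w')" "linear_wrt sc scV (\<lambda>v. T u v w')"
    "linear_wrt sc scV (T u v)" for u v w'
    unfolding T_def
    by (auto intro!: linear_wrt_sweedler linear_wrt_sweedler_param linear_wrt_F_left linear_wrt_F_right
        linear_wrt_intros linear_wrt_comp[OF linear_wrt_sweedler])
  have "sw F (S w) = sw (\<lambda>y w'. scV (eps y) (sw F (S w'))) w"
    by (rule sweedler_counit_left[symmetric])
      (auto intro!: linear_wrt_comp[OF linear_wrt_sweedler] F_left F_right linear_wrt_S)
  also have "\<dots> = sw (\<lambda>y w'. sw (\<lambda>u v. T u v w') y) w"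
    by (simp add: T_def sweedler_antipode_triple_right)
  also have "\<dots> = sw (\<lambda>u x. sw (\<lambda>v w'. T u v w') x) w"
    by (rule sweedler_coassoc[OF lin])
  also have "\<dots> = sw (\<lambda>u x. scV (eps x) (sw (\<lambda>a b. F (S a) (S b)) u)) w"
    by (simp add: T_def sweedler_antipode_triple_left)
  also have "\<dots> = sw (\<lambda>a b. F (S a) (S b)) w"
    by (rule sweedler_counit_right)
      (auto intro!: linear_wrt_sweedler linear_wrt_F_left linear_wrt_F_right linear_wrt_intros)
  finally show ?thesis .
qed

end

lemma sweedler_cocycle_summand:
  assumes F_left: "\<And>y. linear_wrt sc scV (\<lambda>x. F x y)" and F_right: "\<And>x. linear_wrt sc scV (F x)"
    and B1: "coalg_hom sc Cop eps B1" and B2: "coalg_hom sc Cop eps B2"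
  shows "sw F (B1 x * S (B2 y)) = sw (\<lambda>x1 x2. sw (\<lambda>y1 y2. F (B1 x1 * S (B2 y1)) (B1 x2 * S (B2 y2))) y) x"
proof -
  note lin = linear_wrt_comp[OF F_left] linear_wrt_comp[OF F_right] linear_wrt_intros
    linear_wrt_coalg_hom[OF B1] linear_wrt_coalg_hom[OF B2]
  have "sw F (B1 x * S (B2 y)) = sw (\<lambda>p q. sw (\<lambda>r s. F (p * r) (q * s)) (S (B2 y))) (B1 x)"
    by (rule sweedler_mult[OF F_left F_right])
  also have "\<dots> = sw (\<lambda>p q. sw (\<lambda>r s. F (B1 p * r) (B1 q * s)) (S (B2 y))) x"
    by (rule sweedler_coalg_hom[OF _ _ B1]) (auto intro!: linear_wrt_sweedler_param lin)
  also have "\<dots> = sw (\<lambda>p q. sw (\<lambda>r s. F (B1 p * S r) (B1 q * S s)) (B2 y)) x"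
    by (subst sweedler_antipode) (auto intro!: lin)
  also have "\<dots> = sw (\<lambda>p q. sw (\<lambda>r s. F (B1 p * S (B2 r)) (B1 q * S (B2 s))) y) x"
    by (subst sweedler_coalg_hom[OF _ _ B2]) (auto intro!: lin)
  finally show ?thesis .
qed

lemma sweedler_cocycle:
  assumes F_left: "\<And>y. linear_wrt sc scV (\<lambda>x. F x y)" and F_right: "\<And>x. linear_wrt sc scV (F x)"
    and B1: "coalg_hom sc Cop eps B1" and B2: "coalg_hom sc Cop eps B2"
  shows "sw F (cocycle Cop S B1 B2 c) = sw (\<lambda>x y. F (cocycle Cop S B1 B2 x) (cocycle Cop S B1 B2 y)) c"
proof -
  have "sw F (cocycle Cop S B1 B2 c) = sw (\<lambda>x y. sw F (B1 x * S (B2 y))) c"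
    unfolding cocycle_sweedler by (rule linear_wrt_sweedler_app[OF linear_wrt_sweedler[OF F_left F_right]])
  also have "\<dots> = sw (\<lambda>x y. sw (\<lambda>x1 x2. sw (\<lambda>y1 y2. F (B1 x1 * S (B2 y1)) (B1 x2 * S (B2 y2))) y) x) c"
    by (simp only: sweedler_cocycle_summand[OF assms])
  also have "\<dots> = sw (\<lambda>x y. sw (\<lambda>x1 x2. sw (\<lambda>y1 y2. F (B1 x1 * S (B2 x2)) (B1 y1 * S (B2 y2))) y) x) c"
    by (rule sweedler_middle_swap[where K="\<lambda>a b c d. F (B1 a * S (B2 c)) (B1 b * S (B2 d))"])
      (auto intro!: linear_wrt_comp[OF F_left] linear_wrt_comp[OF F_right] linear_wrt_intros
        linear_wrt_coalg_hom[OF B1] linear_wrt_coalg_hom[OF B2])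
  also have "\<dots> = sw (\<lambda>x y. F (cocycle Cop S B1 B2 x) (cocycle Cop S B1 B2 y)) c"
  proof -
    have "F (cocycle Cop S B1 B2 x) (cocycle Cop S B1 B2 y)
        = sw (\<lambda>x1 x2. sw (\<lambda>y1 y2. F (B1 x1 * S (B2 x2)) (B1 y1 * S (B2 y2))) y) x" for x y
      unfolding cocycle_sweedler
      by (subst linear_wrt_sweedler_app[OF F_left]) (simp add: linear_wrt_sweedler_app[OF F_right])
    then show ?thesis
      by simp
  qed
  finally show ?thesis .
qed

end

section \<open>Characters and the descendent product\<close>

lemma linear_wrt_cocycle:
  assumes "cocomm_hopf_algebra sc Cop eps S" "coalg_hom sc Cop eps B1" "coalg_hom sc Cop eps B2"
  shows "linear_wrt sc sc (cocycle Cop S B1 B2)"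
proof -
  interpret hopf_sweedler sc Cop eps S sc
    by (rule hopf_sweedler.intro[OF assms(1) vector_space_cocomm_hopf_algebra[OF assms(1)]])
  have "cocycle Cop S B1 B2 = sw (\<lambda>x y. B1 x * S (B2 y))"
    by (rule ext) (rule cocycle_sweedler)
  then show ?thesis
    by (auto intro!: linear_wrt_sweedler linear_wrt_intros
        linear_wrt_coalg_hom[OF assms(2)] linear_wrt_coalg_hom[OF assms(3)])
qed

lemma desc_op_one: "desc_op Cop S B1 B2 a 1 = cocycle Cop S B1 B2 a"
  by (simp add: desc_op_def cocycle_def)

lemma rota_baxter_cocycle_absorb:
  assumes "rota_baxter_system sc Cop eps S B1 B2"
  shows "B1 (cocycle Cop S B1 B2 a) = B1 a" and "B2 (cocycle Cop S B1 B2 a) = B2 a"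
proof -
  have "B1 1 = 1" "B2 1 = 1"
    "B1 a * B1 1 = B1 (desc_op Cop S B1 B2 a 1)" "B2 a * B2 1 = B2 (desc_op Cop S B1 B2 a 1)"
    using assms unfolding rota_baxter_system_def by blast+
  then show "B1 (cocycle Cop S B1 B2 a) = B1 a" "B2 (cocycle Cop S B1 B2 a) = B2 a"
    by (simp_all add: desc_op_one)
qed

lemma Char_cocycle:
  assumes "f \<in> Char sc scA"
  shows "f (cocycle Cop S B1 B2 a) = sweedler Cop (\<lambda>x y. f (B1 x) * f (S (B2 y))) a"
  using assms unfolding Char_def cocycle_sweedler
  by (auto simp: linear_wrt_sweedler_app[OF linear_imp_linear_wrt])

lemma Char_desc_op:
  fixes scA :: "'k::field \<Rightarrow> 'a::comm_ring_1 \<Rightarrow> 'a"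
  assumes "f \<in> Char sc scA"
  shows "f (desc_op Cop S B1 B2 a b) = f (cocycle Cop S B1 B2 a) * f b"
proof -
  have f: "linear_wrt sc scA f" "\<And>x y. f (x * y) = f x * f y"
    using assms unfolding Char_def by (auto intro: linear_imp_linear_wrt)
  have "f (desc_op Cop S B1 B2 a b) = (\<Sum>(x,y)\<leftarrow>Cop a. f (B1 x) * f (S (B2 y)) * f b)"
    unfolding desc_op_def by (simp add: linear_wrt_sum_list[OF f(1)] f(2) mult_ac)
  also have "\<dots> = f (cocycle Cop S B1 B2 a) * f b"
    by (simp add: Char_cocycle[OF assms] sweedler_def sum_list_mult_const split_def)
  finally show ?thesis .
qed

lemma Char_cocycle_cocycle:
  assumes RB: "rota_baxter_system sc Cop eps S B1 B2" and A: "unital_comm_algebra scA"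
    and f: "f \<in> Char sc scA"
  shows "f (cocycle Cop S B1 B2 (cocycle Cop S B1 B2 c)) = f (cocycle Cop S B1 B2 c)"
proof -
  have H: "cocomm_hopf_algebra sc Cop eps S" and B: "coalg_hom sc Cop eps B1" "coalg_hom sc Cop eps B2"
    using RB by (simp_all add: rota_baxter_system_def)
  have A_mult: "\<And>c x y. scA c (x * y) = scA c x * y"
    using A by (simp add: unital_comm_algebra_def)
  interpret hopf_sweedler sc Cop eps S scA
    using H A by (simp add: hopf_sweedler_def unital_comm_algebra_def)
  have f_lin: "linear_wrt sc scA f"
    using f by (simp add: Char_def linear_imp_linear_wrt)
  let ?\<sigma> = "cocycle Cop S B1 B2"
  have "f (?\<sigma> (?\<sigma> c)) = sw (\<lambda>x y. f (B1 x) * f (S (B2 y))) (?\<sigma> c)"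
    by (rule Char_cocycle[OF f])
  also have "\<dots> = sw (\<lambda>x y. f (B1 (?\<sigma> x)) * f (S (B2 (?\<sigma> y)))) c"
    by (rule sweedler_cocycle[OF _ _ B])
      (auto intro!: linear_wrt_mult_right_const[OF A_mult] linear_wrt_mult_left_const[OF A_mult]
        linear_wrt_comp[OF f_lin] linear_wrt_intros linear_wrt_coalg_hom[OF B(1)] linear_wrt_coalg_hom[OF B(2)])
  also have "\<dots> = f (?\<sigma> c)"
    by (simp add: rota_baxter_cocycle_absorb[OF RB] Char_cocycle[OF f])
  finally show ?thesis .
qed

lemma Char_desc_op_desc_space:
  assumes RB: "rota_baxter_system sc Cop eps S B1 B2" and A: "unital_comm_algebra scA"
    and f: "f \<in> Char sc scA" and a: "a \<in> desc_space Cop S B1 B2"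
  shows "f (desc_op Cop S B1 B2 a b) = f a * f b"
proof -
  obtain c where c: "a = cocycle Cop S B1 B2 c"
    using a unfolding desc_space_def by blast
  show ?thesis
    by (simp add: Char_desc_op[OF f] c Char_cocycle_cocycle[OF RB A f])
qed

lemma Psi_Char_desc:
  assumes RB: "rota_baxter_system sc Cop eps S B1 B2" and DH: "desc_hopf_structure sc Cop S B1 B2"
    and A: "unital_comm_algebra scA" and f: "f \<in> Char sc scA"
  shows "Psi (desc_space Cop S B1 B2) f \<in> Char_desc sc Cop S B1 B2 scA"
proof -
  let ?H1 = "desc_space Cop S B1 B2"
  have \<sigma>: "linear_wrt sc sc (cocycle Cop S B1 B2)"
    using RB unfolding rota_baxter_system_def by (blast intro: linear_wrt_cocycle)
  have closed_add: "a + b \<in> ?H1" if "a \<in> ?H1" "b \<in> ?H1" for a b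
    using that \<sigma> unfolding desc_space_def by (auto simp flip: linear_wrt_add)
  have closed_scale: "sc c a \<in> ?H1" if "a \<in> ?H1" for a c
    using that \<sigma> unfolding desc_space_def by (auto simp flip: linear_wrt_scale)
  have "1 \<in> ?H1" "\<And>a b. a \<in> ?H1 \<Longrightarrow> b \<in> ?H1 \<Longrightarrow> desc_op Cop S B1 B2 a b \<in> ?H1"
    using DH by (simp_all add: desc_hopf_structure_def Let_def)
  moreover have "linear_wrt sc scA f" "f 1 = 1"
    using f by (simp_all add: Char_def linear_imp_linear_wrt)
  ultimately show ?thesis
    using closed_add closed_scale Char_desc_op_desc_space[OF RB A f]
    by (auto simp: Char_desc_def Psi_def Let_def linear_wrt_add linear_wrt_scale)
qed

lemma desc_cop:
  assumes "\<exists>xs. tensor_eq sc (Cop a) xs \<and> set xs \<subseteq> H1 \<times> H1"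
  shows "tensor_eq sc (Cop a) (desc_cop sc Cop H1 a)" and "set (desc_cop sc Cop H1 a) \<subseteq> H1 \<times> H1"
  using someI_ex[OF assms] unfolding desc_cop_def by blast+

lemma Psi_conv:
  fixes sc :: "'k::field \<Rightarrow> 'h::ring_1 \<Rightarrow> 'h" and scA :: "'k \<Rightarrow> 'a::comm_ring_1 \<Rightarrow> 'a"
  assumes H: "vector_space sc" and A: "unital_comm_algebra scA"
    and f: "Vector_Spaces.linear sc scA f" and g: "Vector_Spaces.linear sc scA g"
    and restricts: "\<And>a. a \<in> H1 \<Longrightarrow> \<exists>xs. tensor_eq sc (Cop a) xs \<and> set xs \<subseteq> H1 \<times> H1"
  shows "Psi H1 (conv Cop f g) = conv_desc sc Cop H1 (Psi H1 f) (Psi H1 g)"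
proof
  fix a
  show "Psi H1 (conv Cop f g) a = conv_desc sc Cop H1 (Psi H1 f) (Psi H1 g) a"
  proof (cases "a \<in> H1")
    case True
    note rep = desc_cop[where Cop = Cop, OF restricts[OF True]]
    have V: "vector_space scA" and A_mult: "\<And>c x y. scA c (x * y) = scA c x * y"
      using A by (simp_all add: unital_comm_algebra_def)
    have "conv_desc sc Cop H1 (Psi H1 f) (Psi H1 g) a = (\<Sum>(x,y)\<leftarrow>desc_cop sc Cop H1 a. f x * g y)"
      using True rep(2) by (auto simp: conv_desc_def Psi_def intro!: arg_cong[where f=sum_list] map_cong)
    also have "\<dots> = (\<Sum>(x,y)\<leftarrow>Cop a. f x * g y)"
      by (intro tensor_eq_sum_bilinear[OF H V rep(1), symmetric] linear_wrt_mult_right_const[OF A_mult]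
          linear_wrt_mult_left_const[OF A_mult] f[THEN linear_imp_linear_wrt] g[THEN linear_imp_linear_wrt])
    finally show ?thesis
      using True by (simp add: Psi_def conv_def)
  qed (simp add: Psi_def conv_desc_def)
qed

theorem mainTheorem14:
  fixes sc :: "'k::field_char_0 \<Rightarrow> 'h::ring_1 \<Rightarrow> 'h"
    and Cop :: "'h \<Rightarrow> ('h \<times> 'h) list"
    and eps :: "'h \<Rightarrow> 'k"
    and S B1 B2 :: "'h \<Rightarrow> 'h"
    and scA :: "'k \<Rightarrow> 'a::comm_ring_1 \<Rightarrow> 'a"
  assumes "rota_baxter_system sc Cop eps S B1 B2"
    and "desc_hopf_structure sc Cop S B1 B2"
    and "unital_comm_algebra scA"
  shows "(\<forall>f\<in>Char sc scA. Psi (desc_space Cop S B1 B2) f \<in> Char_desc sc Cop S B1 B2 scA)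
       \<and> (\<forall>f\<in>Char sc scA. \<forall>g\<in>Char sc scA.
            Psi (desc_space Cop S B1 B2) (conv Cop f g)
            = conv_desc sc Cop (desc_space Cop S B1 B2)
                (Psi (desc_space Cop S B1 B2) f) (Psi (desc_space Cop S B1 B2) g))"
proof -
  have H: "vector_space sc"
    using assms(1) unfolding rota_baxter_system_def by (blast intro: vector_space_cocomm_hopf_algebra)
  have restricts: "\<And>a. a \<in> desc_space Cop S B1 B2
      \<Longrightarrow> \<exists>xs. tensor_eq sc (Cop a) xs \<and> set xs \<subseteq> desc_space Cop S B1 B2 \<times> desc_space Cop S B1 B2"
    using assms(2) by (simp add: desc_hopf_structure_def Let_def)
  have "Psi (desc_space Cop S B1 B2) (conv Cop f g)
      = conv_desc sc Cop (desc_space Cop S B1 B2) (Psi (desc_space Cop S B1 B2) f) (Psi (desc_space Cop S B1 B2) g)"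
    if "f \<in> Char sc scA" "g \<in> Char sc scA" for f g
    using that by (intro Psi_conv[OF H assms(3) _ _ restricts]) (simp_all add: Char_def)
  then show ?thesis
    using Psi_Char_desc[OF assms] by blast
qed

end
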